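(* Suppose $V:\mathbb R^2\to\mathbb R$ satisfies $(V_0)$ and $(V_2)$. Then $(\nabla V(x),x)\ge0$ for all $x\in\mathbb R^2$.
   Context: Condition $(V_0)$: $V\in L^1_{loc}(\mathbb R^2)$, $V_0:=\inf_{\mathbb R^2}V>0$, and the Lebesgue measure of $\{x\in\mathbb R^2: V(x)\le M\}$ is finite for every $M>0$. Condition $(V_2)$: $V\in C^1(\mathbb R^2,\mathbb R)$ and, with $\mathcal V(x):=V(x)-\frac12(\nabla V(x),x)$, for every $x\in\mathbb R^2$ the function $t\mapsto\mathcal V(tx)$ is nondecreasing on $(0,\infty)$. *)

theory Defs
  imports "HOL-Analysis.Analysis"
begin

definition grad :: "(real^2 \<Rightarrow> real) \<Rightarrow> real^2 \<Rightarrow> real^2" where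
  "grad V x = (\<chi> i. frechet_derivative V (at x) (axis i 1))"

definition C1 :: "(real^2 \<Rightarrow> real) \<Rightarrow> bool" where
  "C1 V \<longleftrightarrow> (\<forall>x. V differentiable (at x)) \<and> continuous_on UNIV (grad V)"

definition cond_V0 :: "(real^2 \<Rightarrow> real) \<Rightarrow> bool" where
  "cond_V0 V \<longleftrightarrow>
     (\<forall>K. compact K \<longrightarrow> set_integrable lebesgue K V)
   \<and> bdd_below (range V) \<and> (INF x. V x) > 0
   \<and> (\<forall>M>0. {x. V x \<le> M} \<in> sets lebesgue \<and> emeasure lebesgue {x. V x \<le> M} < \<infinity>)"

definition calV :: "(real^2 \<Rightarrow> real) \<Rightarrow> real^2 \<Rightarrow> real" where
  "calV V x = V x - 1/2 * (grad V x \<bullet> x)"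

definition cond_V2 :: "(real^2 \<Rightarrow> real) \<Rightarrow> bool" where
  "cond_V2 V \<longleftrightarrow> C1 V \<and> (\<forall>x. mono_on {0<..} (\<lambda>t. calV V (t *\<^sub>R x)))"

end

theory Submission imports Defs begin

text \<open>Along a ray, \<open>f t = V (t x)\<close> satisfies \<open>f 1 - f'(1)/2 \<le> f t - t f'(t)/2\<close> for \<open>t \<ge> 1\<close>
by (V_2). This differential inequality says that \<open>(f t - c) / t\<^sup>2\<close> is nonincreasing,
with \<open>c = f 1 - f'(1)/2\<close>, so \<open>f t \<le> c + t\<^sup>2 f'(1)/2\<close>. If \<open>f'(1) = (\<nabla>V(x), x)\<close> were
negative, \<open>V\<close> would tend to \<open>-\<infinity>\<close> along the ray, contradicting that \<open>V\<close> is bounded below (the only part of (V_0) needed).\<close>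

lemma linear_eq_inner_axis:
  fixes D :: "real^'n \<Rightarrow> real"
  assumes "linear D"
  shows "D h = (\<chi> i. D (axis i 1)) \<bullet> h"
proof -
  have "D h = D (\<Sum>i\<in>UNIV. h$i *\<^sub>R axis i 1)"
    using basis_expansion[of h] by (simp add: scalar_mult_eq_scaleR)
  also have "\<dots> = (\<Sum>i\<in>UNIV. h$i * D (axis i 1))"
    by (simp add: linear_sum[OF assms] linear_scale[OF assms])
  also have "\<dots> = (\<chi> i. D (axis i 1)) \<bullet> h"
    by (simp add: inner_vec_def mult.commute)
  finally show ?thesis .
qed

lemma has_derivative_grad:
  assumes "V differentiable (at y)"
  shows "(V has_derivative (\<lambda>h. grad V y \<bullet> h)) (at y)"
proof -
  have D: "(V has_derivative frechet_derivative V (at y)) (at y)"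
    using assms frechet_derivative_works by blast
  then have "frechet_derivative V (at y) = (\<lambda>h. grad V y \<bullet> h)"
    unfolding grad_def by (intro ext linear_eq_inner_axis has_derivative_linear)
  with D show ?thesis by simp
qed

lemma has_real_derivative_along_ray:
  assumes "\<And>y. V differentiable (at y)"
  shows "((\<lambda>t. V (t *\<^sub>R x)) has_real_derivative grad V (t *\<^sub>R x) \<bullet> x) (at t)"
proof -
  have "((\<lambda>t. V (t *\<^sub>R x)) has_derivative (\<lambda>h. grad V (t *\<^sub>R x) \<bullet> (h *\<^sub>R x))) (at t)"
    by (rule has_derivative_compose[OF _ has_derivative_grad[OF assms]])
       (auto intro!: derivative_eq_intros)
  then show ?thesis
    by (simp add: has_field_derivative_def mult.commute[of _ "grad V (t *\<^sub>R x) \<bullet> x"])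
qed

lemma quotient_bound_from_differential_inequality:
  fixes f f' :: "real \<Rightarrow> real"
  assumes deriv: "\<And>s. s \<ge> 1 \<Longrightarrow> (f has_real_derivative f' s) (at s)"
    and ineq: "\<And>s. s \<ge> 1 \<Longrightarrow> c \<le> f s - s/2 * f' s"
    and "t \<ge> 1"
  shows "f t - c \<le> t\<^sup>2 * (f 1 - c)"
proof -
  define k where "k s = (f s - c) / s\<^sup>2" for s
  have "k t \<le> k 1"
  proof (rule DERIV_nonpos_imp_nonincreasing[OF \<open>t \<ge> 1\<close>])
    fix s assume "1 \<le> s" "s \<le> t"
    have "(k has_real_derivative ((f' s * s\<^sup>2 - (f s - c) * (2 * s)) / (s\<^sup>2)\<^sup>2)) (at s)"
      unfolding k_def using \<open>1 \<le> s\<close>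
      by (auto intro!: derivative_eq_intros deriv simp: power2_eq_square)
    moreover have "f' s * s\<^sup>2 - (f s - c) * (2 * s) = 2 * s * (s/2 * f' s - (f s - c))"
      by (simp add: algebra_simps power2_eq_square)
    moreover have "2 * s * (s/2 * f' s - (f s - c)) \<le> 0"
      using ineq[of s] \<open>1 \<le> s\<close> by (intro mult_nonneg_nonpos) auto
    ultimately show "\<exists>y. (k has_real_derivative y) (at s) \<and> y \<le> 0"
      by (metis divide_nonpos_nonneg zero_le_power2)
  qed
  with \<open>t \<ge> 1\<close> show ?thesis
    by (simp add: k_def divide_le_eq mult.commute)
qed

lemma derivative_nonneg_if_bounded_below:
  fixes f f' :: "real \<Rightarrow> real"
  assumes deriv: "\<And>s. s \<ge> 1 \<Longrightarrow> (f has_real_derivative f' s) (at s)"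
    and ineq: "\<And>s. s \<ge> 1 \<Longrightarrow> f 1 - f' 1 / 2 \<le> f s - s/2 * f' s"
    and bounded: "\<And>s. m \<le> f s"
  shows "f' 1 \<ge> 0"
proof (rule ccontr)
  assume "\<not> f' 1 \<ge> 0"
  then have neg: "f' 1 < 0" by simp
  define c where "c = f 1 - f' 1 / 2"
  define t where "t = max 1 (2 * (c - m + 1) / - f' 1)"
  have "t \<ge> 1" by (simp add: t_def)
  have "f t - c \<le> t\<^sup>2 * (f' 1 / 2)"
    using quotient_bound_from_differential_inequality[OF deriv ineq \<open>t \<ge> 1\<close>]
    by (simp add: c_def)
  also have "\<dots> \<le> t * (f' 1 / 2)"
    using \<open>t \<ge> 1\<close> neg by (intro mult_right_mono_neg) (auto simp: power2_eq_square)
  also have "\<dots> \<le> -(c - m + 1)"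
  proof -
    have "2 * (c - m + 1) / - f' 1 \<le> t" by (simp add: t_def)
    then have "2 * (c - m + 1) \<le> t * - f' 1"
      using neg pos_divide_le_eq[of "- f' 1" "2 * (c - m + 1)" t] by simp
    then show ?thesis by simp
  qed
  finally show False using bounded[of t] by simp
qed

theorem lemma5p1:
  fixes V :: "real^2 \<Rightarrow> real"
  assumes "cond_V0 V" and "cond_V2 V"
  shows "\<forall>x. grad V x \<bullet> x \<ge> 0"
proof
  fix x
  from assms(1) obtain m where m: "\<And>y. m \<le> V y"
    unfolding cond_V0_def bdd_below_def by auto
  have diff: "\<And>y. V differentiable (at y)"
    and mono: "mono_on {0<..} (\<lambda>t. calV V (t *\<^sub>R x))"
    using assms(2) unfolding cond_V2_def C1_def by auto
  have "calV V (1 *\<^sub>R x) \<le> calV V (s *\<^sub>R x)" if "s \<ge> 1" for s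
    using mono_onD[OF mono, of 1 s] that by simp
  then have "grad V (1 *\<^sub>R x) \<bullet> x \<ge> 0"
    by (intro derivative_nonneg_if_bounded_below[where f = "\<lambda>t. V (t *\<^sub>R x)"
          and f' = "\<lambda>t. grad V (t *\<^sub>R x) \<bullet> x" and m = m]
        has_real_derivative_along_ray diff m)
       (simp_all add: calV_def)
  then show "grad V x \<bullet> x \<ge> 0" by simp
qed

end
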